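(* Let $a,b,c,d,e,f,g>0$ with $b+c\ne f$, and let $X=(X^1,X^2)$ be a time-homogeneous Markov chain on $\{(0,0),(0,1),(1,0),(1,1)\}$ (states ordered as listed) with $X_0=(0,0)$ and generator $$\Lambda=\begin{pmatrix}-(a+b+c)&b&a&c\\0&-(d+e)&d&e\\0&0&-f&f\\0&0&g&-g\end{pmatrix}.$$ Then $X^2$ is not a Markov chain with respect to its own filtration $\mathbb F^{X^2}$ (and hence not with respect to $\mathbb F^X$ either).
   Context: $\mathbb F^{X^2}$ and $\mathbb F^X$ denote the natural filtrations of $X^2$ and $X$. *)

theory Defs
  imports "HOL-Probability.Probability"
begin

text \<open>Square matrices of size N represented as functions on indices 0..N-1.\<close>

fun mpow :: "nat \<Rightarrow> (nat \<Rightarrow> nat \<Rightarrow> real) \<Rightarrow> nat \<Rightarrow> nat \<Rightarrow> nat \<Rightarrow> real" where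
  "mpow N A 0 = (\<lambda>i j. if i = j then 1 else 0)"
| "mpow N A (Suc n) = (\<lambda>i j. \<Sum>k<N. mpow N A n i k * A k j)"

definition mexp :: "nat \<Rightarrow> (nat \<Rightarrow> nat \<Rightarrow> real) \<Rightarrow> real \<Rightarrow> nat \<Rightarrow> nat \<Rightarrow> real" where
  "mexp N A t i j = (\<Sum>n. t ^ n / fact n * mpow N A n i j)"

text \<open>State indexing: (0,0) -> 0, (0,1) -> 1, (1,0) -> 2, (1,1) -> 3.\<close>
definition st_idx :: "nat \<times> nat \<Rightarrow> nat" where
  "st_idx x = 2 * fst x + snd x"

definition Gen :: "real \<Rightarrow> real \<Rightarrow> real \<Rightarrow> real \<Rightarrow> real \<Rightarrow> real \<Rightarrow> real \<Rightarrow> nat \<Rightarrow> nat \<Rightarrow> real" where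
  "Gen a b c d e f g i j =
     [[-(a+b+c), b, a, c],
      [0, -(d+e), d, e],
      [0, 0, -f, f],
      [0, 0, g, -g]] ! i ! j"

text \<open>Times range over [0,oo). Finite cylinder events {X u1 = z1, ..., X un = zn} with
  all ui <= s generate F^X_s.\<close>
definition markov_chain_gen ::
  "'w measure \<Rightarrow> (real \<Rightarrow> 'w \<Rightarrow> 's) \<Rightarrow> 's set \<Rightarrow> ('s \<Rightarrow> nat) \<Rightarrow> (nat \<Rightarrow> nat \<Rightarrow> real) \<Rightarrow> bool" where
  "markov_chain_gen M X S idx Q \<longleftrightarrow>
     prob_space M \<and>
     (\<forall>t\<ge>0. X t \<in> measurable M (count_space UNIV)) \<and>
     (\<forall>t\<ge>0. \<forall>\<omega>\<in>space M. X t \<omega> \<in> S) \<and>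
     (\<forall>(cyl :: (real \<times> 's) list) s t i j.
        (\<forall>(u,z)\<in>set cyl. 0 \<le> u \<and> u \<le> s) \<longrightarrow> 0 \<le> s \<longrightarrow> s \<le> t \<longrightarrow> i \<in> S \<longrightarrow> j \<in> S \<longrightarrow>
        measure M {\<omega>\<in>space M. X t \<omega> = j \<and> X s \<omega> = i \<and> (\<forall>(u,z)\<in>set cyl. X u \<omega> = z)}
        = measure M {\<omega>\<in>space M. X s \<omega> = i \<and> (\<forall>(u,z)\<in>set cyl. X u \<omega> = z)}
          * mexp (card S) Q (t - s) (idx i) (idx j))"

text \<open>The discrete-valued process Y is Markov with respect to the natural filtration of Z
  (Y being adapted to it): for every s <= t, every event A of F^Z_s (it suffices to take
  finite cylinders, which form a generating pi-system), and all values y, j: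
  P(Y_t = j, Y_s = y, A) P(Y_s = y) = P(Y_t = j, Y_s = y) P(Y_s = y, A),
  i.e. P(Y_t = j | F^Z_s) = P(Y_t = j | Y_s).\<close>
definition markov_wrt ::
  "'w measure \<Rightarrow> (real \<Rightarrow> 'w \<Rightarrow> 'z) \<Rightarrow> (real \<Rightarrow> 'w \<Rightarrow> 'y) \<Rightarrow> bool" where
  "markov_wrt M Z Y \<longleftrightarrow>
     (\<forall>(cyl :: (real \<times> 'z) list) s t y j.
        (\<forall>(u,z)\<in>set cyl. 0 \<le> u \<and> u \<le> s) \<longrightarrow> 0 \<le> s \<longrightarrow> s \<le> t \<longrightarrow>
        measure M {\<omega>\<in>space M. Y t \<omega> = j \<and> Y s \<omega> = y \<and> (\<forall>(u,z)\<in>set cyl. Z u \<omega> = z)}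
          * measure M {\<omega>\<in>space M. Y s \<omega> = y}
        = measure M {\<omega>\<in>space M. Y t \<omega> = j \<and> Y s \<omega> = y}
          * measure M {\<omega>\<in>space M. Y s \<omega> = y \<and> (\<forall>(u,z)\<in>set cyl. Z u \<omega> = z)})"

end

theory Submission
  imports Defs
begin

(* Write Y = snd X.  The event {Y = 0} lumps the two states (0,0) and (1,0), from
   which Y stays 0 over a time step h with different probabilities l00 and l10 (their
   difference is h (f - b - c) + O(h^2), nonzero for small h since b + c ~= f).  Knowing
   additionally that Y_h = 1 (or X_h = (0,1)) forces X_{2h} = (1,0) on {Y_{2h} = 0}, because
   the state (0,0) cannot be re-entered; so conditionally on this past the probability of
   Y_{3h} = 0 is l10, while conditionally on Y_{2h} = 0 alone it is a proper mixture of l00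
   and l10.  Hence the cylinder condition of markov_wrt fails at s = 2h, t = 3h. *)

lemma mpow_bound:
  assumes entry_bound: "\<forall>k<N. \<forall>j<N. \<bar>A k j\<bar> \<le> K" and "0 \<le> K" and "j < N"
  shows "\<bar>mpow N A n i j\<bar> \<le> (real N * K) ^ n"
  using \<open>j < N\<close>
proof (induction n arbitrary: j)
  case 0
  then show ?case by simp
next
  case (Suc n)
  have "\<bar>mpow N A (Suc n) i j\<bar> \<le> (\<Sum>k<N. \<bar>mpow N A n i k\<bar> * \<bar>A k j\<bar>)"
    by (simp add: abs_mult[symmetric] sum_abs)
  also have "\<dots> \<le> (\<Sum>k<N. (real N * K) ^ n * K)"
    by (intro sum_mono mult_mono) (use Suc entry_bound \<open>0 \<le> K\<close> in auto)
  also have "\<dots> = (real N * K) ^ Suc n" by simp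
  finally show ?case .
qed

lemma mpow_1: "i < N \<Longrightarrow> mpow N A 1 i j = A i j"
  by (simp add: if_distrib[of "\<lambda>x. x * _"] cong: if_cong)

lemma mexp_second_order_remainder:
  assumes entry_bound: "\<forall>k<N. \<forall>j<N. \<bar>A k j\<bar> \<le> K" and "0 \<le> K"
    and "i < N" "j < N" and "0 \<le> t" "t * (real N * K) \<le> 1"
  shows "\<bar>mexp N A t i j - ((if i = j then 1 else 0) + t * A i j)\<bar> \<le> (t * (real N * K))\<^sup>2"
proof -
  define x where "x = t * (real N * K)"
  have "0 \<le> x" unfolding x_def using assms by simp
  define summand where "summand n = t ^ n / fact n * mpow N A n i j" for n
  define major where "major n = x ^ n / fact n" for n
  have summand_major: "\<bar>summand n\<bar> \<le> major n" for n
  proof -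
    have "\<bar>summand n\<bar> = t ^ n / fact n * \<bar>mpow N A n i j\<bar>"
      unfolding summand_def using \<open>0 \<le> t\<close> by (simp add: abs_mult)
    also have "\<dots> \<le> t ^ n / fact n * (real N * K) ^ n"
      by (intro mult_left_mono mpow_bound[OF entry_bound \<open>0 \<le> K\<close> \<open>j < N\<close>]) (use \<open>0 \<le> t\<close> in simp)
    also have "\<dots> = major n" unfolding major_def x_def by (simp add: power_mult_distrib)
    finally show ?thesis .
  qed
  have "summable major"
    using summable_exp[of x] unfolding major_def by (simp add: divide_inverse mult.commute)
  then have major_tail: "summable (\<lambda>n. major (n + 2))"
    by (rule summable_ignore_initial_segment)
  have summand_tail: "summable (\<lambda>n. \<bar>summand (n + 2)\<bar>)"
    by (rule summable_comparison_test[OF _ major_tail]) (use summand_major in auto)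
  have "summable summand"
    using summable_ignore_initial_segment[OF summable_rabs_cancel[OF summand_tail], of 0]
      summable_iff_shift[of summand 2] by simp
  then have "mexp N A t i j = (\<Sum>n. summand (n + 2)) + (\<Sum>n<2. summand n)"
    unfolding mexp_def summand_def[symmetric] by (rule suminf_split_initial_segment)
  moreover have "(\<Sum>n<2. summand n) = (if i = j then 1 else 0) + t * A i j"
    by (simp add: summand_def eval_nat_numeral mpow_1[OF \<open>i < N\<close>, simplified])
  moreover have "\<bar>\<Sum>n. summand (n + 2)\<bar> \<le> (\<Sum>n. major (n + 2))"
    using summable_rabs[OF summand_tail] suminf_le[OF _ summand_tail major_tail] summand_major by fastforce
  moreover have "(\<Sum>n. major (n + 2)) = exp x - 1 - x"
    using exp_first_two_terms[of x] unfolding major_def by (simp add: field_simps)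
  moreover have "exp x - 1 - x \<le> x\<^sup>2"
    using exp_bound[OF \<open>0 \<le> x\<close>] assms unfolding x_def by simp
  ultimately show ?thesis unfolding x_def by simp
qed

lemma mexp_derivative_at_0:
  assumes "i < N" "j < N"
  shows "((\<lambda>h. (mexp N A h i j - (if i = j then 1 else 0)) / h) \<longlongrightarrow> A i j) (at_right 0)"
proof -
  define K where "K = (\<Sum>k<N. \<Sum>l<N. \<bar>A k l\<bar>)"
  have entry_bound: "\<forall>k<N. \<forall>l<N. \<bar>A k l\<bar> \<le> K"
  proof (intro allI impI)
    fix k l assume "k < N" "l < N"
    then have "\<bar>A k l\<bar> \<le> (\<Sum>l'<N. \<bar>A k l'\<bar>)"
      by (intro member_le_sum) auto
    also have "\<dots> \<le> K"
      unfolding K_def using \<open>k < N\<close> by (intro member_le_sum[where f="\<lambda>k. \<Sum>l<N. \<bar>A k l\<bar>"]) (auto intro: sum_nonneg)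
    finally show "\<bar>A k l\<bar> \<le> K" .
  qed
  have "0 \<le> K" unfolding K_def by (simp add: sum_nonneg)
  define c where "c = real N * K"
  have "0 \<le> c" unfolding c_def using \<open>0 \<le> K\<close> by simp
  have small: "\<forall>\<^sub>F h in at_right 0. 0 < h \<and> h * c \<le> 1"
  proof (rule eventually_at_rightI)
    fix h :: real assume "h \<in> {0<..<1 / (c + 1)}"
    then have "0 < h" "h * (c + 1) < 1" using \<open>0 \<le> c\<close> by (simp_all add: field_simps)
    then show "0 < h \<and> h * c \<le> 1" by (simp add: algebra_simps)
  qed (use \<open>0 \<le> c\<close> in simp)
  have "\<forall>\<^sub>F h in at_right 0.
      norm ((mexp N A h i j - (if i = j then 1 else 0)) / h - A i j) \<le> h * c\<^sup>2"
    using small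
  proof eventually_elim
    case (elim h)
    define R where "R = mexp N A h i j - ((if i = j then 1 else 0) + h * A i j)"
    have "\<bar>R\<bar> \<le> (h * c)\<^sup>2"
      using mexp_second_order_remainder[OF entry_bound \<open>0 \<le> K\<close> assms] elim
      unfolding R_def c_def by simp
    have "norm ((mexp N A h i j - (if i = j then 1 else 0)) / h - A i j) = \<bar>R\<bar> / h"
      using elim unfolding R_def by (simp add: field_simps)
    also have "\<dots> \<le> (h * c)\<^sup>2 / h"
      using \<open>\<bar>R\<bar> \<le> (h * c)\<^sup>2\<close> elim by (simp add: divide_right_mono)
    also have "\<dots> = h * c\<^sup>2"
      using elim by (simp add: power2_eq_square)
    finally show ?case .
  qed
  moreover have "((\<lambda>h. h * c\<^sup>2) \<longlongrightarrow> 0) (at_right 0)"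
    by (intro tendsto_mult_left_zero tendsto_ident_at)
  ultimately show ?thesis
    by (subst LIM_zero_iff[symmetric]) (rule Lim_null_comparison)
qed

lemma mexp_tendsto_at_0:
  assumes "i < N" "j < N"
  shows "((\<lambda>h. mexp N A h i j) \<longlongrightarrow> (if i = j then 1 else 0)) (at_right 0)"
proof -
  let ?\<delta> = "if i = j then 1 else 0 :: real"
  have "((\<lambda>h. ?\<delta> + h * ((mexp N A h i j - ?\<delta>) / h)) \<longlongrightarrow> ?\<delta> + 0 * A i j) (at_right 0)"
    by (intro tendsto_intros mexp_derivative_at_0 assms)
  moreover have "\<forall>\<^sub>F h in at_right 0. ?\<delta> + h * ((mexp N A h i j - ?\<delta>) / h) = mexp N A h i j"
    using eventually_at_right_less[of 0] by eventually_elim simp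
  ultimately show ?thesis by (simp add: tendsto_cong)
qed

lemma mpow_unreachable_column:
  assumes "\<forall>k<N. k \<noteq> j \<longrightarrow> A k j = 0" and "i \<noteq> j"
  shows "mpow N A n i j = 0"
proof (induction n)
  case 0
  then show ?case using \<open>i \<noteq> j\<close> by simp
next
  case (Suc n)
  have "mpow N A n i k * A k j = 0" if "k < N" for k
    using Suc assms(1) that by (cases "k = j") auto
  then show ?case by (simp add: sum.neutral)
qed

lemma mexp_unreachable_column:
  assumes "\<forall>k<N. k \<noteq> j \<longrightarrow> A k j = 0" and "i \<noteq> j"
  shows "mexp N A t i j = 0"
  using mpow_unreachable_column[of N j A i] assms by (simp add: mexp_def)

lemma Gen_unreachable_origin:
  "i \<noteq> 0 \<Longrightarrow> mexp 4 (Gen a b c d e f g) t i 0 = 0"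
  by (rule mexp_unreachable_column) (auto simp: Gen_def numeral_eq_Suc less_Suc_eq)

(* A small step h on which the transitions (0,0)->(0,1), (0,1)->(1,0), (0,0)->(0,0) have
   positive probability and the probabilities of keeping the second coordinate 0 from (0,0)
   and from (1,0) differ; it follows from the first-order behaviour at 0. *)
lemma Gen_small_time:
  fixes a b c d e f g :: real
  defines "P \<equiv> mexp 4 (Gen a b c d e f g)"
  assumes "b > 0" "d > 0" and "b + c \<noteq> f"
  shows "\<exists>h>0. P h 0 1 > 0 \<and> P h 1 2 > 0 \<and> P h 0 0 > 0
               \<and> P h 0 0 + P h 0 2 \<noteq> P h 2 0 + P h 2 2"
proof -
  have rate: "((\<lambda>h. (P h i j - (if i = j then 1 else 0)) / h) \<longlongrightarrow> Gen a b c d e f g i j) (at_right 0)"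
    if "i < 4" "j < 4" for i j
    unfolding P_def using that by (rule mexp_derivative_at_0)
  have "((\<lambda>h. P h 0 1 / h) \<longlongrightarrow> b) (at_right 0)"
    using rate[of 0 1] by (simp add: Gen_def)
  then have "\<forall>\<^sub>F h in at_right 0. 0 < P h 0 1 / h"
    using \<open>b > 0\<close> by (rule order_tendstoD(1))
  moreover have "((\<lambda>h. P h 1 2 / h) \<longlongrightarrow> d) (at_right 0)"
    using rate[of 1 2] by (simp add: Gen_def)
  then have "\<forall>\<^sub>F h in at_right 0. 0 < P h 1 2 / h"
    using \<open>d > 0\<close> by (rule order_tendstoD(1))
  moreover have "((\<lambda>h. P h 0 0) \<longlongrightarrow> 1) (at_right 0)"
    unfolding P_def using mexp_tendsto_at_0[of 0 4 0] by simp
  then have "\<forall>\<^sub>F h in at_right 0. 0 < P h 0 0"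
    by (rule order_tendstoD(1)) simp
  moreover have "((\<lambda>h. (P h 0 0 + P h 0 2 - (P h 2 0 + P h 2 2)) / h)
      \<longlongrightarrow> -(a + b + c) + a - (0 + - f)) (at_right 0)"
  proof -
    have "(\<lambda>h. (P h 0 0 + P h 0 2 - (P h 2 0 + P h 2 2)) / h)
        = (\<lambda>h. (P h 0 0 - 1) / h + P h 0 2 / h - (P h 2 0 / h + (P h 2 2 - 1) / h))"
      by (simp add: fun_eq_iff diff_divide_distrib add_divide_distrib)
    then show ?thesis
      using rate[of 0 0] rate[of 0 2] rate[of 2 0] rate[of 2 2]
      by (simp only:) (intro tendsto_intros; simp add: Gen_def)
  qed
  then have "\<forall>\<^sub>F h in at_right 0. (P h 0 0 + P h 0 2 - (P h 2 0 + P h 2 2)) / h \<noteq> 0"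
    using \<open>b + c \<noteq> f\<close> by (intro tendsto_imp_eventually_ne) auto
  ultimately have "\<forall>\<^sub>F h in at_right 0. 0 < h \<and> P h 0 1 > 0 \<and> P h 1 2 > 0 \<and> P h 0 0 > 0
               \<and> P h 0 0 + P h 0 2 \<noteq> P h 2 0 + P h 2 2"
    using eventually_at_right_less[of 0]
    by eventually_elim (auto simp: zero_less_divide_iff)
  then show ?thesis
    using eventually_happens'[OF trivial_limit_at_right_real] by blast
qed

lemma (in finite_measure) measure_split_by_value:
  assumes "Z \<in> M \<rightarrow>\<^sub>M count_space UNIV" and "finite R"
    and "{\<omega>\<in>space M. A \<omega>} \<in> sets M" and "{\<omega>\<in>space M. B \<omega>} \<in> sets M"
  shows "measure M {\<omega>\<in>space M. A \<omega> \<and> Z \<omega> \<in> R \<and> B \<omega>}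
       = (\<Sum>r\<in>R. measure M {\<omega>\<in>space M. A \<omega> \<and> Z \<omega> = r \<and> B \<omega>})"
proof -
  let ?E = "\<lambda>r. {\<omega>\<in>space M. A \<omega> \<and> Z \<omega> = r \<and> B \<omega>}"
  have "?E r \<in> sets M" for r
    using measurable_sets_Collect[OF assms(1), of "\<lambda>z. z = r"] assms(3,4) by auto
  moreover have "{\<omega>\<in>space M. A \<omega> \<and> Z \<omega> \<in> R \<and> B \<omega>} = (\<Union>r\<in>R. ?E r)" by auto
  moreover have "disjoint_family_on ?E R" by (auto simp: disjoint_family_on_def)
  ultimately show ?thesis
    using finite_measure_finite_Union[OF \<open>finite R\<close>, of ?E] by (simp add: image_subset_iff)
qed

lemma markov_wrtD:
  assumes "markov_wrt M Z Y" "\<forall>(u, z)\<in>set cyl. 0 \<le> u \<and> u \<le> s" "0 \<le> s" "s \<le> t"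
  shows "measure M {\<omega>\<in>space M. Y t \<omega> = j \<and> Y s \<omega> = y \<and> (\<forall>(u, z)\<in>set cyl. Z u \<omega> = z)}
           * measure M {\<omega>\<in>space M. Y s \<omega> = y}
       = measure M {\<omega>\<in>space M. Y t \<omega> = j \<and> Y s \<omega> = y}
           * measure M {\<omega>\<in>space M. Y s \<omega> = y \<and> (\<forall>(u, z)\<in>set cyl. Z u \<omega> = z)}"
  using assms unfolding markov_wrt_def by blast

abbreviation four_states :: "(nat \<times> nat) set" where
  "four_states \<equiv> {(0, 0), (0, 1), (1, 0), (1, 1)}"

locale four_state_chain =
  fixes M :: "'w measure" and X :: "real \<Rightarrow> 'w \<Rightarrow> nat \<times> nat" and Q :: "nat \<Rightarrow> nat \<Rightarrow> real"
  assumes chain: "markov_chain_gen M X four_states st_idx Q"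
begin

sublocale prob_space M
  using chain by (simp add: markov_chain_gen_def)

definition transition :: "real \<Rightarrow> nat \<times> nat \<Rightarrow> nat \<times> nat \<Rightarrow> real" where
  "transition r i j = mexp 4 Q r (st_idx i) (st_idx j)"

lemma X_measurable: "0 \<le> t \<Longrightarrow> X t \<in> M \<rightarrow>\<^sub>M count_space UNIV"
  using chain by (simp add: markov_chain_gen_def)

lemma X_range: "0 \<le> t \<Longrightarrow> \<omega> \<in> space M \<Longrightarrow> X t \<omega> \<in> four_states"
  using chain unfolding markov_chain_gen_def by blast

lemma X_event: "0 \<le> t \<Longrightarrow> {\<omega>\<in>space M. P (X t \<omega>)} \<in> events"
  using measurable_sets_Collect[OF X_measurable, of t P] by simp

lemma markov_cylinder:
  assumes "\<forall>(u, z)\<in>set cyl. 0 \<le> u \<and> u \<le> s" "0 \<le> s" "s \<le> t" "i \<in> four_states" "j \<in> four_states"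
  shows "prob {\<omega>\<in>space M. X t \<omega> = j \<and> X s \<omega> = i \<and> (\<forall>(u, z)\<in>set cyl. X u \<omega> = z)}
       = prob {\<omega>\<in>space M. X s \<omega> = i \<and> (\<forall>(u, z)\<in>set cyl. X u \<omega> = z)} * transition (t - s) i j"
proof -
  have "card four_states = 4" by simp
  then show ?thesis
    using chain assms unfolding markov_chain_gen_def transition_def by presburger
qed

definition markov_given :: "('w \<Rightarrow> bool) \<Rightarrow> real \<Rightarrow> real \<Rightarrow> bool" where
  "markov_given C s t \<longleftrightarrow> (\<forall>i\<in>four_states. \<forall>j\<in>four_states.
     prob {\<omega>\<in>space M. C \<omega> \<and> X s \<omega> = i \<and> X t \<omega> = j}
       = prob {\<omega>\<in>space M. C \<omega> \<and> X s \<omega> = i} * transition (t - s) i j)"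

lemma markov_givenD:
  assumes "markov_given C s t" "i \<in> four_states" "j \<in> four_states"
  shows "prob {\<omega>\<in>space M. C \<omega> \<and> X s \<omega> = i \<and> X t \<omega> = j}
       = prob {\<omega>\<in>space M. C \<omega> \<and> X s \<omega> = i} * transition (t - s) i j"
  using assms unfolding markov_given_def by blast

lemma markov_given_True:
  assumes "0 \<le> s" "s \<le> t"
  shows "markov_given (\<lambda>_. True) s t"
  unfolding markov_given_def
  using markov_cylinder[of "[]" s t] assms by (simp add: conj_commute)

lemma markov_given_past_value:
  assumes "0 \<le> u" "u \<le> s" "s \<le> t" "R \<subseteq> four_states"
  shows "markov_given (\<lambda>\<omega>. X u \<omega> \<in> R) s t"
  unfolding markov_given_def
proof (intro ballI)
  fix i j assume ij: "i \<in> four_states" "j \<in> four_states"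
  have "finite R" using assms(4) finite_subset by blast
  have "0 \<le> s" "0 \<le> t" using assms by linarith+
  note split = measure_split_by_value[OF X_measurable[OF \<open>0 \<le> u\<close>] \<open>finite R\<close>, of "\<lambda>_. True"]
  have "{\<omega>\<in>space M. X s \<omega> = i \<and> X t \<omega> = j} \<in> events"
    by (intro sets.sets_Collect_conj X_event \<open>0 \<le> s\<close> \<open>0 \<le> t\<close>)
  then have "prob {\<omega>\<in>space M. X u \<omega> \<in> R \<and> X s \<omega> = i \<and> X t \<omega> = j}
      = (\<Sum>r\<in>R. prob {\<omega>\<in>space M. X u \<omega> = r \<and> X s \<omega> = i \<and> X t \<omega> = j})"
    using split by simp
  also have "\<dots> = (\<Sum>r\<in>R. prob {\<omega>\<in>space M. X u \<omega> = r \<and> X s \<omega> = i} * transition (t - s) i j)"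
  proof (rule sum.cong)
    fix r
    have "prob {\<omega>\<in>space M. X t \<omega> = j \<and> X s \<omega> = i \<and> X u \<omega> = r}
        = prob {\<omega>\<in>space M. X s \<omega> = i \<and> X u \<omega> = r} * transition (t - s) i j"
      using markov_cylinder[of "[(u, r)]" s t i j] assms ij by simp
    then show "prob {\<omega>\<in>space M. X u \<omega> = r \<and> X s \<omega> = i \<and> X t \<omega> = j}
        = prob {\<omega>\<in>space M. X u \<omega> = r \<and> X s \<omega> = i} * transition (t - s) i j"
      by (simp only: conj_ac)
  qed simp
  also have "\<dots> = prob {\<omega>\<in>space M. X u \<omega> \<in> R \<and> X s \<omega> = i} * transition (t - s) i j"
    using split[of "\<lambda>\<omega>. X s \<omega> = i"] X_event[OF \<open>0 \<le> s\<close>] by (simp add: sum_distrib_right)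
  finally show "prob {\<omega>\<in>space M. X u \<omega> \<in> R \<and> X s \<omega> = i \<and> X t \<omega> = j}
      = prob {\<omega>\<in>space M. X u \<omega> \<in> R \<and> X s \<omega> = i} * transition (t - s) i j" .
qed

definition lumped :: "real \<Rightarrow> nat \<times> nat \<Rightarrow> real" where
  "lumped r i = transition r i (0, 0) + transition r i (1, 0)"

lemma snd_X_eq_iff:
  assumes "0 \<le> t" "\<omega> \<in> space M"
  shows "snd (X t \<omega>) = y \<longleftrightarrow> X t \<omega> \<in> {(0, y), (1, y)}"
  using X_range[OF assms] by auto

lemma prob_snd_split:
  assumes "0 \<le> s" "{\<omega>\<in>space M. C \<omega>} \<in> events"
  shows "prob {\<omega>\<in>space M. C \<omega> \<and> snd (X s \<omega>) = y}
       = prob {\<omega>\<in>space M. C \<omega> \<and> X s \<omega> = (0, y)} + prob {\<omega>\<in>space M. C \<omega> \<and> X s \<omega> = (1, y)}"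
proof -
  have "prob {\<omega>\<in>space M. C \<omega> \<and> snd (X s \<omega>) = y}
      = prob {\<omega>\<in>space M. C \<omega> \<and> X s \<omega> \<in> {(0, y), (1, y)} \<and> True}"
    using snd_X_eq_iff[OF \<open>0 \<le> s\<close>] by (intro arg_cong[where f=prob] Collect_cong) auto
  also have "\<dots> = (\<Sum>r\<in>{(0, y), (1, y)}. prob {\<omega>\<in>space M. C \<omega> \<and> X s \<omega> = r \<and> True})"
    by (rule measure_split_by_value[OF X_measurable[OF \<open>0 \<le> s\<close>] _ assms(2)]) simp_all
  finally show ?thesis by simp
qed

lemma lumped_joint_prob:
  assumes "0 \<le> s" "s \<le> t" "markov_given C s t" "{\<omega>\<in>space M. C \<omega>} \<in> events"
  shows "prob {\<omega>\<in>space M. C \<omega> \<and> snd (X s \<omega>) = 0 \<and> snd (X t \<omega>) = 0}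
       = prob {\<omega>\<in>space M. C \<omega> \<and> X s \<omega> = (0, 0)} * lumped (t - s) (0, 0)
       + prob {\<omega>\<in>space M. C \<omega> \<and> X s \<omega> = (1, 0)} * lumped (t - s) (1, 0)"
proof -
  have "0 \<le> t" using assms by linarith
  have to_lumped: "prob {\<omega>\<in>space M. C \<omega> \<and> X s \<omega> = i \<and> snd (X t \<omega>) = 0}
      = prob {\<omega>\<in>space M. C \<omega> \<and> X s \<omega> = i} * lumped (t - s) i" if "i \<in> four_states" for i
  proof -
    have "{\<omega>\<in>space M. C \<omega> \<and> X s \<omega> = i} \<in> events"
      by (intro sets.sets_Collect_conj X_event assms(4) \<open>0 \<le> s\<close>)
    then have "prob {\<omega>\<in>space M. (C \<omega> \<and> X s \<omega> = i) \<and> snd (X t \<omega>) = 0}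
        = prob {\<omega>\<in>space M. (C \<omega> \<and> X s \<omega> = i) \<and> X t \<omega> = (0, 0)}
        + prob {\<omega>\<in>space M. (C \<omega> \<and> X s \<omega> = i) \<and> X t \<omega> = (1, 0)}"
      by (rule prob_snd_split[OF \<open>0 \<le> t\<close>])
    then show ?thesis
      using markov_givenD[OF assms(3) that, of "(0, 0)"] markov_givenD[OF assms(3) that, of "(1, 0)"]
      by (simp add: lumped_def distrib_left)
  qed
  have "prob {\<omega>\<in>space M. C \<omega> \<and> snd (X s \<omega>) = 0 \<and> snd (X t \<omega>) = 0}
      = prob {\<omega>\<in>space M. (C \<omega> \<and> snd (X t \<omega>) = 0) \<and> snd (X s \<omega>) = 0}"
    by (intro arg_cong[where f=prob] Collect_cong) auto
  also have "\<dots> = prob {\<omega>\<in>space M. (C \<omega> \<and> snd (X t \<omega>) = 0) \<and> X s \<omega> = (0, 0)}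
                + prob {\<omega>\<in>space M. (C \<omega> \<and> snd (X t \<omega>) = 0) \<and> X s \<omega> = (1, 0)}"
    by (intro prob_snd_split sets.sets_Collect_conj X_event assms(4) \<open>0 \<le> s\<close> \<open>0 \<le> t\<close>)
  also have "\<dots> = prob {\<omega>\<in>space M. C \<omega> \<and> X s \<omega> = (0, 0) \<and> snd (X t \<omega>) = 0}
                + prob {\<omega>\<in>space M. C \<omega> \<and> X s \<omega> = (1, 0) \<and> snd (X t \<omega>) = 0}"
    by (simp only: conj_ac)
  finally show ?thesis using to_lumped by simp
qed

lemma lumped_markov_fails:
  assumes "0 \<le> s" "s \<le> t" "markov_given C s t" "{\<omega>\<in>space M. C \<omega>} \<in> events"
    and no_00: "prob {\<omega>\<in>space M. C \<omega> \<and> X s \<omega> = (0, 0)} = 0"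
    and pos_10: "prob {\<omega>\<in>space M. C \<omega> \<and> X s \<omega> = (1, 0)} > 0"
    and pos_00: "prob {\<omega>\<in>space M. X s \<omega> = (0, 0)} > 0"
    and differ: "lumped (t - s) (0, 0) \<noteq> lumped (t - s) (1, 0)"
  shows "prob {\<omega>\<in>space M. snd (X t \<omega>) = 0 \<and> snd (X s \<omega>) = 0 \<and> C \<omega>}
           * prob {\<omega>\<in>space M. snd (X s \<omega>) = 0}
       \<noteq> prob {\<omega>\<in>space M. snd (X t \<omega>) = 0 \<and> snd (X s \<omega>) = 0}
           * prob {\<omega>\<in>space M. snd (X s \<omega>) = 0 \<and> C \<omega>}"
proof -
  define n where "n = prob {\<omega>\<in>space M. C \<omega> \<and> X s \<omega> = (1, 0)}"
  define m0 where "m0 = prob {\<omega>\<in>space M. X s \<omega> = (0, 0)}"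
  define m1 where "m1 = prob {\<omega>\<in>space M. X s \<omega> = (1, 0)}"
  define l0 where "l0 = lumped (t - s) (0, 0)"
  define l1 where "l1 = lumped (t - s) (1, 0)"
  have joint_C: "prob {\<omega>\<in>space M. snd (X t \<omega>) = 0 \<and> snd (X s \<omega>) = 0 \<and> C \<omega>} = n * l1"
    using lumped_joint_prob[OF assms(1-4)] no_00 unfolding n_def l1_def by (simp add: conj_ac)
  have joint: "prob {\<omega>\<in>space M. snd (X t \<omega>) = 0 \<and> snd (X s \<omega>) = 0} = m0 * l0 + m1 * l1"
    using lumped_joint_prob[OF assms(1,2) markov_given_True[OF assms(1,2)]]
    unfolding m0_def m1_def l0_def l1_def by (simp add: conj_ac)
  have marginal: "prob {\<omega>\<in>space M. snd (X s \<omega>) = 0} = m0 + m1"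
    using prob_snd_split[OF \<open>0 \<le> s\<close>, of "\<lambda>_. True"] unfolding m0_def m1_def by simp
  have marginal_C: "prob {\<omega>\<in>space M. snd (X s \<omega>) = 0 \<and> C \<omega>} = n"
    using prob_snd_split[OF \<open>0 \<le> s\<close> assms(4)] no_00 unfolding n_def by (simp add: conj_commute)
  have "n * m0 * (l1 - l0) \<noteq> 0"
    using pos_10 pos_00 differ unfolding n_def m0_def l0_def l1_def by simp
  then show ?thesis
    unfolding joint_C joint marginal marginal_C by (auto simp: algebra_simps)
qed

lemma start_path_prob:
  assumes X0: "AE \<omega> in M. X 0 \<omega> = (0, 0)" and "0 \<le> h" "j \<in> four_states" "k \<in> four_states"
  shows "prob {\<omega>\<in>space M. X 0 \<omega> = (0, 0) \<and> X h \<omega> = j \<and> X (2 * h) \<omega> = k}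
       = transition h (0, 0) j * transition h j k"
proof -
  have "prob {\<omega>\<in>space M. X 0 \<omega> = (0, 0)} = 1"
    using prob_Collect_eq_1[OF X_event[of 0 "\<lambda>x. x = (0, 0)"]] X0 by simp
  then have first_step: "prob {\<omega>\<in>space M. X 0 \<omega> = (0, 0) \<and> X h \<omega> = j} = transition h (0, 0) j"
    using markov_givenD[OF markov_given_True[OF order_refl \<open>0 \<le> h\<close>], of "(0, 0)" j] assms by simp
  have "markov_given (\<lambda>\<omega>. X 0 \<omega> \<in> {(0, 0)}) h (2 * h)"
    by (rule markov_given_past_value) (use \<open>0 \<le> h\<close> in auto)
  from markov_givenD[OF this \<open>j \<in> four_states\<close> \<open>k \<in> four_states\<close>] show ?thesis
    using first_step by simp
qed

lemma prob_unreachable: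
  assumes "0 \<le> s" "s \<le> t" "R \<subseteq> four_states" "j \<in> four_states"
    and unreachable: "\<And>i. i \<in> R \<Longrightarrow> transition (t - s) i j = 0"
  shows "prob {\<omega>\<in>space M. X s \<omega> \<in> R \<and> X t \<omega> = j} = 0"
proof -
  have "finite R" using assms(3) finite_subset by blast
  have "0 \<le> t" using assms by linarith
  have "prob {\<omega>\<in>space M. True \<and> X s \<omega> \<in> R \<and> X t \<omega> = j}
      = (\<Sum>i\<in>R. prob {\<omega>\<in>space M. True \<and> X s \<omega> = i \<and> X t \<omega> = j})"
    by (rule measure_split_by_value[OF X_measurable[OF \<open>0 \<le> s\<close>] \<open>finite R\<close>])
      (use X_event[OF \<open>0 \<le> t\<close>] in simp_all)
  also have "\<dots> = 0"
  proof (rule sum.neutral, intro ballI)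
    fix i assume "i \<in> R"
    then show "prob {\<omega>\<in>space M. True \<and> X s \<omega> = i \<and> X t \<omega> = j} = 0"
      using markov_givenD[OF markov_given_True[OF assms(1,2)], of i j] assms unreachable by auto
  qed
  finally show ?thesis by simp
qed

lemma second_coordinate_counterexample:
  assumes X0: "AE \<omega> in M. X 0 \<omega> = (0, 0)" and "0 < h"
    and pos_01: "transition h (0, 0) (0, 1) > 0" and pos_12: "transition h (0, 1) (1, 0) > 0"
    and pos_00: "transition h (0, 0) (0, 0) > 0"
    and no_return: "\<And>i. i \<in> four_states \<Longrightarrow> i \<noteq> (0, 0) \<Longrightarrow> transition h i (0, 0) = 0"
    and differ: "lumped h (0, 0) \<noteq> lumped h (1, 0)"
    and R: "(0, 1) \<in> R" "R \<subseteq> {(0, 1), (1, 1)}"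
  shows "prob {\<omega>\<in>space M. snd (X (3 * h) \<omega>) = 0 \<and> snd (X (2 * h) \<omega>) = 0 \<and> X h \<omega> \<in> R}
           * prob {\<omega>\<in>space M. snd (X (2 * h) \<omega>) = 0}
       \<noteq> prob {\<omega>\<in>space M. snd (X (3 * h) \<omega>) = 0 \<and> snd (X (2 * h) \<omega>) = 0}
           * prob {\<omega>\<in>space M. snd (X (2 * h) \<omega>) = 0 \<and> X h \<omega> \<in> R}"
proof (rule lumped_markov_fails)
  have "0 \<le> h" using \<open>0 < h\<close> by simp
  show "0 \<le> 2 * h" "2 * h \<le> 3 * h" using \<open>0 < h\<close> by simp_all
  show "markov_given (\<lambda>\<omega>. X h \<omega> \<in> R) (2 * h) (3 * h)"
    by (rule markov_given_past_value) (use \<open>0 < h\<close> R in auto)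
  show "{\<omega>\<in>space M. X h \<omega> \<in> R} \<in> events" by (rule X_event[OF \<open>0 \<le> h\<close>])
  show "lumped (3 * h - 2 * h) (0, 0) \<noteq> lumped (3 * h - 2 * h) (1, 0)"
    using differ by simp
  have path_event: "{\<omega>\<in>space M. X 0 \<omega> = (0, 0) \<and> X h \<omega> = j \<and> X (2 * h) \<omega> = k} \<in> events" for j k
    by (intro sets.sets_Collect_conj X_event) (use \<open>0 \<le> h\<close> in simp_all)
  show "prob {\<omega>\<in>space M. X h \<omega> \<in> R \<and> X (2 * h) \<omega> = (0, 0)} = 0"
    using R(2) no_return \<open>0 \<le> h\<close> by (intro prob_unreachable) auto
  have "0 < transition h (0, 0) (0, 1) * transition h (0, 1) (1, 0)"
    using pos_01 pos_12 by simp
  also have "\<dots> = prob {\<omega>\<in>space M. X 0 \<omega> = (0, 0) \<and> X h \<omega> = (0, 1) \<and> X (2 * h) \<omega> = (1, 0)}"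
    using start_path_prob[OF X0 \<open>0 \<le> h\<close>] by simp
  also have "\<dots> \<le> prob {\<omega>\<in>space M. X h \<omega> \<in> R \<and> X (2 * h) \<omega> = (1, 0)}"
    using R(1) \<open>0 \<le> h\<close> by (intro finite_measure_mono path_event sets.sets_Collect_conj X_event) auto
  finally show "prob {\<omega>\<in>space M. X h \<omega> \<in> R \<and> X (2 * h) \<omega> = (1, 0)} > 0" .
  have "0 < transition h (0, 0) (0, 0) * transition h (0, 0) (0, 0)"
    using pos_00 by simp
  also have "\<dots> = prob {\<omega>\<in>space M. X 0 \<omega> = (0, 0) \<and> X h \<omega> = (0, 0) \<and> X (2 * h) \<omega> = (0, 0)}"
    using start_path_prob[OF X0 \<open>0 \<le> h\<close>] by simp
  also have "\<dots> \<le> prob {\<omega>\<in>space M. X (2 * h) \<omega> = (0, 0)}"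
    using \<open>0 \<le> h\<close> by (intro finite_measure_mono path_event X_event) auto
  finally show "prob {\<omega>\<in>space M. X (2 * h) \<omega> = (0, 0)} > 0" .
qed

(* With R = {(0,1),(1,1)} this is the cylinder {Y_h = 1} of F^Y, with R = {(0,1)} the
   cylinder {X_h = (0,1)} of F^X. *)
lemma second_coordinate_not_markov:
  assumes X0: "AE \<omega> in M. X 0 \<omega> = (0, 0)" and "0 < h"
    and "transition h (0, 0) (0, 1) > 0" "transition h (0, 1) (1, 0) > 0"
    and "transition h (0, 0) (0, 0) > 0"
    and "\<And>i. i \<in> four_states \<Longrightarrow> i \<noteq> (0, 0) \<Longrightarrow> transition h i (0, 0) = 0"
    and "lumped h (0, 0) \<noteq> lumped h (1, 0)"
  shows "\<not> markov_wrt M (\<lambda>t \<omega>. snd (X t \<omega>)) (\<lambda>t \<omega>. snd (X t \<omega>))"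
    and "\<not> markov_wrt M X (\<lambda>t \<omega>. snd (X t \<omega>))"
proof -
  have times: "0 \<le> h" "h \<le> 2 * h" "0 \<le> 2 * h" "2 * h \<le> 3 * h" using \<open>0 < h\<close> by simp_all
  note counterexample = second_coordinate_counterexample[OF assms]
  have "\<omega> \<in> space M \<Longrightarrow> snd (X h \<omega>) = 1 \<longleftrightarrow> X h \<omega> \<in> {(0, 1), (1, 1)}" for \<omega>
    using snd_X_eq_iff[OF times(1)] by simp
  then have "prob {\<omega>\<in>space M. snd (X (3 * h) \<omega>) = 0 \<and> snd (X (2 * h) \<omega>) = 0 \<and> snd (X h \<omega>) = 1}
           * prob {\<omega>\<in>space M. snd (X (2 * h) \<omega>) = 0}
       \<noteq> prob {\<omega>\<in>space M. snd (X (3 * h) \<omega>) = 0 \<and> snd (X (2 * h) \<omega>) = 0}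
           * prob {\<omega>\<in>space M. snd (X (2 * h) \<omega>) = 0 \<and> snd (X h \<omega>) = 1}"
    using counterexample[of "{(0, 1), (1, 1)}"] by (simp cong: conj_cong)
  then show "\<not> markov_wrt M (\<lambda>t \<omega>. snd (X t \<omega>)) (\<lambda>t \<omega>. snd (X t \<omega>))"
    using markov_wrtD[of M "\<lambda>t \<omega>. snd (X t \<omega>)" _ "[(h, 1)]" "2 * h" "3 * h" 0 0] times by auto
  show "\<not> markov_wrt M X (\<lambda>t \<omega>. snd (X t \<omega>))"
    using markov_wrtD[of M X _ "[(h, (0, 1))]" "2 * h" "3 * h" 0 0] counterexample[of "{(0, 1)}"] times
    by auto
qed

end

theorem mainTheorem10:
  fixes M :: "'w measure" and X :: "real \<Rightarrow> 'w \<Rightarrow> nat \<times> nat"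
    and a b c d e f g :: real
  assumes "a > 0" "b > 0" "c > 0" "d > 0" "e > 0" "f > 0" "g > 0"
    and "b + c \<noteq> f"
    and "markov_chain_gen M X {(0,0),(0,1),(1,0),(1,1)} st_idx (Gen a b c d e f g)"
    and "AE \<omega> in M. X 0 \<omega> = (0,0)"
  shows "\<not> markov_wrt M (\<lambda>t \<omega>. snd (X t \<omega>)) (\<lambda>t \<omega>. snd (X t \<omega>))
         \<and> \<not> markov_wrt M X (\<lambda>t \<omega>. snd (X t \<omega>))"
proof -
  interpret four_state_chain M X "Gen a b c d e f g"
    using assms(9) by unfold_locales
  obtain h where "h > 0"
    and "transition h (0, 0) (0, 1) > 0" "transition h (0, 1) (1, 0) > 0"
    and "transition h (0, 0) (0, 0) > 0" "lumped h (0, 0) \<noteq> lumped h (1, 0)"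
    using Gen_small_time[where a = a and e = e and g = g, OF \<open>b > 0\<close> \<open>d > 0\<close> \<open>b + c \<noteq> f\<close>]
    unfolding transition_def lumped_def by (auto simp: st_idx_def)
  moreover have "transition h i (0, 0) = 0" if "i \<in> four_states" "i \<noteq> (0, 0)" for i
    using that Gen_unreachable_origin unfolding transition_def by (auto simp: st_idx_def)
  ultimately show ?thesis
    using second_coordinate_not_markov[OF assms(10)] by blast
qed

end
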